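(* For every $n\ge0$, the sequence $(W_0,W_1,\dots,W_n)$ of Whitney numbers of the second kind of $\Pi(n)$ is weakly increasing. Moreover, for $n\ge3$ it is strictly increasing.
   Context: $[n]_0=\{0,\dots,n\}$. A priority forest on $[n]_0$ is a rooted forest with vertex set $[n]_0$ whose component trees $T_0,T_1,\dots$ are increasing (each non-root vertex has a larger label than its parent) and satisfy: for $j<k$ every label of $T_j$ is smaller than every label of $T_k$. The priority lattice $\Pi(n)$ consists of the priority forests on $[n]_0$, ordered by inclusion of edge sets, together with an extra top element $\hat1$ of rank $n+1$; the rank of a priority forest is its number of edges. $W_k$ is the number of elements of $\Pi(n)$ of rank $k$. *)

theory Defs
  imports Main
begin

text \<open>A forest on [n]_0 = {0..n} is given by its edge set E of pairs (parent, child).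
  Increasing rooted forest: every edge goes from a smaller to a larger label,
  and every vertex has at most one parent (the root of each tree is then its minimum).\<close>

definition increasing_forest :: "nat \<Rightarrow> (nat \<times> nat) set \<Rightarrow> bool" where
  "increasing_forest n E \<longleftrightarrow>
     E \<subseteq> {0..n} \<times> {0..n} \<and>
     (\<forall>(p, c) \<in> E. p < c) \<and>
     (\<forall>p q c. (p, c) \<in> E \<longrightarrow> (q, c) \<in> E \<longrightarrow> p = q)"

definition component :: "nat \<Rightarrow> (nat \<times> nat) set \<Rightarrow> nat \<Rightarrow> nat set" where
  "component n E x = {y \<in> {0..n}. (x, y) \<in> (E \<union> E\<inverse>)\<^sup>*}"

definition priority_forest :: "nat \<Rightarrow> (nat \<times> nat) set \<Rightarrow> bool" where
  "priority_forest n E \<longleftrightarrow> increasing_forest n E \<and>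
     (\<forall>x \<in> {0..n}. \<forall>y \<in> {0..n}. component n E x \<noteq> component n E y \<longrightarrow>
        (\<forall>a \<in> component n E x. \<forall>b \<in> component n E y. a < b) \<or>
        (\<forall>a \<in> component n E x. \<forall>b \<in> component n E y. b < a))"

text \<open>Whitney numbers of the second kind of the priority lattice \<Pi>(n):
  priority forests of rank k (= number of edges), plus the top element of rank n+1.\<close>
definition W :: "nat \<Rightarrow> nat \<Rightarrow> nat" where
  "W n k = card {E. priority_forest n E \<and> card E = k} + (if k = n + 1 then 1 else 0)"

end

theory Submission
  imports Defs
begin

text \<open>An increasing forest is a priority forest exactly when no root lies strictly between the
  two ends of an edge. For \<open>k < n\<close> a forest with \<open>k\<close> edges has a root in \<open>{1..n}\<close>; attaching the
  least such root to \<open>0\<close> preserves this property and is injective, because every other child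
  of \<open>0\<close> is smaller than that root. The inequality is strict as soon as some
  forest with \<open>k + 1\<close> edges is not of this form: for \<open>k + 2 \<le> n\<close> the star with centre \<open>1\<close> and
  leaves \<open>2, \<dots>, k + 2\<close> has no edge at \<open>0\<close>, and for \<open>k + 1 = n \<ge> 3\<close> the tree with edges
  \<open>0-1\<close>, \<open>0-2\<close> and \<open>1-j\<close> (\<open>j \<ge> 3\<close>) is not obtained from any forest either.\<close>

text \<open>The roots of \<open>E\<close> are the vertices outside \<open>snd ` E\<close>.\<close>

definition no_root_inside_edges :: "(nat \<times> nat) set \<Rightarrow> bool" where
  "no_root_inside_edges E \<longleftrightarrow> (\<forall>(p, c) \<in> E. \<forall>v. p < v \<and> v < c \<longrightarrow> v \<in> snd ` E)"

lemma increasing_forest_finite: "increasing_forest n E \<Longrightarrow> finite E"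
  unfolding increasing_forest_def by (meson finite_SigmaI finite_atLeastAtMost finite_subset)

lemma increasing_forest_zero_root: "increasing_forest n E \<Longrightarrow> 0 \<notin> snd ` E"
  unfolding increasing_forest_def by force

lemma increasing_forest_rtrancl_le:
  assumes "increasing_forest n E" and "(u, v) \<in> E\<^sup>*"
  shows "u \<le> v"
  using assms(2) by induction (use assms(1) in \<open>fastforce simp: increasing_forest_def\<close>)+

lemma increasing_forest_path_from_root:
  assumes inc: "increasing_forest n E" and root: "r \<notin> snd ` E"
    and path: "(r, y) \<in> (E \<union> E\<inverse>)\<^sup>*"
  shows "(r, y) \<in> E\<^sup>*"
  using path
proof (induction rule: rtrancl_induct)
  case base
  then show ?case by simp
next
  case (step y z)
  from step.hyps(2) show ?case
  proof
    assume "(y, z) \<in> E"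
    then show ?thesis using step.IH by simp
  next
    assume "(y, z) \<in> E\<inverse>"
    then have zy: "(z, y) \<in> E" by simp
    then have "y \<noteq> r" using root by force
    with step.IH obtain w where rw: "(r, w) \<in> E\<^sup>*" and wy: "(w, y) \<in> E"
      by (metis rtranclE)
    have "w = z" using inc zy wy unfolding increasing_forest_def by blast
    then show ?thesis using rw by simp
  qed
qed

lemma priority_forest_no_root_inside_edges:
  assumes pf: "priority_forest n E"
  shows "no_root_inside_edges E"
  unfolding no_root_inside_edges_def
proof clarify
  fix p c v assume pc: "(p, c) \<in> E" and pv: "p < v" and vc: "v < c"
  have inc: "increasing_forest n E" using pf priority_forest_def by blast
  have "p \<le> n" "c \<le> n" using inc pc unfolding increasing_forest_def by auto
  show "v \<in> snd ` E"
  proof (rule ccontr)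
    \<comment> \<open>a root \<open>v\<close> cannot reach \<open>p < v\<close>, so its tree differs from that of \<open>c\<close>, yet \<open>p < v < c\<close>\<close>
    assume root: "v \<notin> snd ` E"
    have v_comp: "v \<in> component n E v"
      and pc_comp: "p \<in> component n E c" "c \<in> component n E c"
      using \<open>c \<le> n\<close> \<open>p \<le> n\<close> vc pc unfolding component_def by auto
    have "component n E v \<noteq> component n E c"
    proof
      assume "component n E v = component n E c"
      then have "(v, p) \<in> (E \<union> E\<inverse>)\<^sup>*" using pc_comp unfolding component_def by auto
      then have "v \<le> p"
        using increasing_forest_path_from_root[OF inc root] increasing_forest_rtrancl_le[OF inc]
        by blast
      with pv show False by simp
    qed
    moreover have "v \<in> {0..n}" "c \<in> {0..n}" using \<open>c \<le> n\<close> vc by auto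
    ultimately show False
      using pf v_comp pc_comp pv vc unfolding priority_forest_def by (metis less_asym)
  qed
qed

text \<open>When \<open>no_root_inside_edges E\<close> holds, \<open>root_of E y\<close> is the root of the tree containing \<open>y\<close>
  (lemmas \<open>root_of_path\<close> and \<open>rtrancl_root_of\<close>).\<close>

definition root_of :: "(nat \<times> nat) set \<Rightarrow> nat \<Rightarrow> nat" where
  "root_of E y = Max {r. r \<le> y \<and> r \<notin> snd ` E}"

lemma root_of_greatest: "r \<le> y \<Longrightarrow> r \<notin> snd ` E \<Longrightarrow> r \<le> root_of E y"
  unfolding root_of_def by (rule Max_ge) auto

lemma
  assumes "0 \<notin> snd ` E"
  shows root_of_le: "root_of E y \<le> y"
    and root_of_is_root: "root_of E y \<notin> snd ` E"
proof -
  have "root_of E y \<in> {r. r \<le> y \<and> r \<notin> snd ` E}"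
    unfolding root_of_def using assms by (intro Max_in) auto
  then show "root_of E y \<le> y" "root_of E y \<notin> snd ` E" by auto
qed

lemma root_of_eq_self: "y \<notin> snd ` E \<Longrightarrow> root_of E y = y"
  unfolding root_of_def by (rule Max_eqI) auto

lemma root_of_mono:
  assumes "0 \<notin> snd ` E" and "y \<le> z"
  shows "root_of E y \<le> root_of E z"
  using assms root_of_greatest[OF _ root_of_is_root] root_of_le by (meson order_trans)

lemma root_of_edge:
  assumes zero: "0 \<notin> snd ` E" and gap: "no_root_inside_edges E"
    and pc: "(p, c) \<in> E" and "p < c"
  shows "root_of E p = root_of E c"
proof (rule antisym)
  show "root_of E p \<le> root_of E c" using root_of_mono[OF zero] \<open>p < c\<close> by simp
  have "c \<in> snd ` E" using pc by force
  then have "root_of E c < c"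
    using root_of_le[OF zero] root_of_is_root[OF zero] by (metis le_neq_implies_less)
  then have "\<not> p < root_of E c"
    using gap pc root_of_is_root[OF zero] unfolding no_root_inside_edges_def by blast
  then show "root_of E c \<le> root_of E p" by (simp add: root_of_greatest root_of_is_root[OF zero])
qed

lemma root_of_path:
  assumes inc: "increasing_forest n E" and gap: "no_root_inside_edges E"
    and path: "(x, y) \<in> (E \<union> E\<inverse>)\<^sup>*"
  shows "root_of E x = root_of E y"
  using path
proof (induction rule: rtrancl_induct)
  case (step y z)
  have "p < c" if "(p, c) \<in> E" for p c using inc that unfolding increasing_forest_def by blast
  with step show ?case
    using root_of_edge[OF increasing_forest_zero_root[OF inc] gap] by auto
qed simp

lemma rtrancl_root_of:
  assumes inc: "increasing_forest n E" and gap: "no_root_inside_edges E"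
  shows "(root_of E y, y) \<in> E\<^sup>*"
proof (induction y rule: less_induct)
  case (less y)
  show ?case
  proof (cases "y \<in> snd ` E")
    case False
    then show ?thesis by (simp add: root_of_eq_self)
  next
    case True
    then obtain p where py: "(p, y) \<in> E" by force
    then have "p < y" using inc unfolding increasing_forest_def by blast
    then have "(root_of E p, p) \<in> E\<^sup>*" using less by blast
    moreover have "root_of E p = root_of E y"
      using root_of_edge[OF increasing_forest_zero_root[OF inc] gap py \<open>p < y\<close>] .
    ultimately show ?thesis using py by (metis rtrancl.rtrancl_into_rtrancl)
  qed
qed

lemma no_root_inside_edges_priority_forest:
  assumes inc: "increasing_forest n E" and gap: "no_root_inside_edges E"
  shows "priority_forest n E"
  unfolding priority_forest_def
proof (intro conjI inc ballI impI)
  fix x y assume ne: "component n E x \<noteq> component n E y"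
  let ?R = "E \<union> E\<inverse>"
  have zero: "0 \<notin> snd ` E" using inc by (rule increasing_forest_zero_root)
  have sym: "sym (?R\<^sup>*)" by (simp add: sym_Un_converse sym_rtrancl)
  have same_root: "root_of E a = root_of E z" if "a \<in> component n E z" for a z
    using that root_of_path[OF inc gap] unfolding component_def by force
  have "root_of E x \<noteq> root_of E y"
  proof
    assume eq: "root_of E x = root_of E y"
    have "(root_of E z, z) \<in> ?R\<^sup>*" for z
      using rtrancl_root_of[OF inc gap] rtrancl_mono[of E ?R] by blast
    then have "(x, y) \<in> ?R\<^sup>*" using eq sym by (metis symD rtrancl_trans)
    then have "(x, z) \<in> ?R\<^sup>* \<longleftrightarrow> (y, z) \<in> ?R\<^sup>*" for z
      using sym by (metis symD rtrancl_trans)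
    then have "component n E x = component n E y" unfolding component_def by auto
    with ne show False ..
  qed
  moreover have "a < b" if "root_of E a < root_of E b" for a b
    using that root_of_mono[OF zero] by (meson not_le)
  ultimately show "(\<forall>a \<in> component n E x. \<forall>b \<in> component n E y. a < b) \<or>
                   (\<forall>a \<in> component n E x. \<forall>b \<in> component n E y. b < a)"
    using same_root by (metis linorder_neqE_nat)
qed

lemma priority_forest_iff:
  "priority_forest n E \<longleftrightarrow> increasing_forest n E \<and> no_root_inside_edges E"
  using priority_forest_no_root_inside_edges no_root_inside_edges_priority_forest
    priority_forest_def by blast

definition forests_of_rank :: "nat \<Rightarrow> nat \<Rightarrow> (nat \<times> nat) set set" where
  "forests_of_rank n k = {E. priority_forest n E \<and> card E = k}"

lemma W_eq_card_forests_of_rank: "k \<le> n \<Longrightarrow> W n k = card (forests_of_rank n k)"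
  unfolding W_def forests_of_rank_def by simp

lemma finite_forests_of_rank: "finite (forests_of_rank n k)"
proof (rule finite_subset)
  show "forests_of_rank n k \<subseteq> Pow ({0..n} \<times> {0..n})"
    unfolding forests_of_rank_def priority_forest_def increasing_forest_def by auto
qed simp

definition first_root :: "nat \<Rightarrow> (nat \<times> nat) set \<Rightarrow> nat" where
  "first_root n E = Min ({1..n} - snd ` E)"

definition attach_first_root :: "nat \<Rightarrow> (nat \<times> nat) set \<Rightarrow> (nat \<times> nat) set" where
  "attach_first_root n E = insert (0, first_root n E) E"

lemma first_root_is_least_root:
  assumes inc: "increasing_forest n E" and card: "card E < n"
  shows "first_root n E \<in> {1..n}" and "first_root n E \<notin> snd ` E"
    and "0 < v \<Longrightarrow> v < first_root n E \<Longrightarrow> v \<in> snd ` E"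
proof -
  have fin: "finite E" using inc by (rule increasing_forest_finite)
  have "card (snd ` E) < card {1..n}" using card_image_le[OF fin, of snd] card by simp
  then have "\<not> {1..n} \<subseteq> snd ` E" by (meson card_mono fin finite_imageI not_le)
  then have "{1..n} - snd ` E \<noteq> {}" by auto
  then have "first_root n E \<in> {1..n} - snd ` E" unfolding first_root_def by (intro Min_in) auto
  then show "first_root n E \<in> {1..n}" "first_root n E \<notin> snd ` E" by auto
  show "v \<in> snd ` E" if "0 < v" "v < first_root n E"
  proof (rule ccontr)
    assume "v \<notin> snd ` E"
    then have "v \<in> {1..n} - snd ` E" using that \<open>first_root n E \<in> {1..n}\<close> by auto
    then have "first_root n E \<le> v" unfolding first_root_def by (intro Min_le) auto
    with that show False by simp
  qed
qed

lemma child_of_zero_less_root: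
  assumes gap: "no_root_inside_edges E" and c: "(0, c) \<in> E"
    and r: "r \<notin> snd ` E" "0 < r"
  shows "c < r"
proof -
  have "c \<noteq> r" using c r by force
  moreover have "\<not> r < c" using gap c r unfolding no_root_inside_edges_def by blast
  ultimately show ?thesis by simp
qed

lemma attach_first_root_mem:
  assumes E: "E \<in> forests_of_rank n k" and "k < n"
  shows "attach_first_root n E \<in> forests_of_rank n (Suc k)"
proof -
  have inc: "increasing_forest n E" and gap: "no_root_inside_edges E" and card: "card E = k"
    using E priority_forest_iff unfolding forests_of_rank_def by auto
  note r = first_root_is_least_root[OF inc, unfolded card, OF \<open>k < n\<close>]
  have "(0, first_root n E) \<notin> E" using r(2) by force
  then have "card (attach_first_root n E) = Suc k"
    using increasing_forest_finite[OF inc] card unfolding attach_first_root_def by simp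
  moreover have "increasing_forest n (attach_first_root n E)"
    using inc r(1,2) unfolding increasing_forest_def attach_first_root_def by force
  moreover have "no_root_inside_edges (attach_first_root n E)"
    using gap r(3) unfolding no_root_inside_edges_def attach_first_root_def by fastforce
  ultimately show ?thesis using priority_forest_iff unfolding forests_of_rank_def by auto
qed

lemma attach_first_root_inj:
  assumes "k < n"
  shows "inj_on (attach_first_root n) (forests_of_rank n k)"
proof
  fix E1 E2 assume E1: "E1 \<in> forests_of_rank n k" and E2: "E2 \<in> forests_of_rank n k"
    and eq: "attach_first_root n E1 = attach_first_root n E2"
  have root: "first_root n E \<notin> snd ` E" "0 < first_root n E"
    and gap: "no_root_inside_edges E" if "E \<in> forests_of_rank n k" for E
    using that first_root_is_least_root[of n E] \<open>k < n\<close> priority_forest_iff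
    unfolding forests_of_rank_def by auto
  have "first_root n E1 = first_root n E2"
  proof (rule ccontr)
    assume ne: "first_root n E1 \<noteq> first_root n E2"
    then have "(0, first_root n E2) \<in> E1" "(0, first_root n E1) \<in> E2"
      using eq unfolding attach_first_root_def by (metis insert_iff prod.inject)+
    then show False
      using child_of_zero_less_root gap root E1 E2 by (meson less_asym)
  qed
  moreover have "E = attach_first_root n E - {(0, first_root n E)}"
    if "E \<in> forests_of_rank n k" for E
    using root(1)[OF that] unfolding attach_first_root_def by force
  ultimately show "E1 = E2" using E1 E2 eq by metis
qed

lemma card_forests_of_rank_le:
  assumes "k < n"
  shows "card (forests_of_rank n k) \<le> card (forests_of_rank n (Suc k))"
  using card_inj_on_le[OF attach_first_root_inj[OF assms] _ finite_forests_of_rank]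
    attach_first_root_mem[OF _ assms] by blast

lemma card_forests_of_rank_less:
  assumes "k < n" and G: "G \<in> forests_of_rank n (Suc k)"
    and not_attached: "G \<notin> attach_first_root n ` forests_of_rank n k"
  shows "card (forests_of_rank n k) < card (forests_of_rank n (Suc k))"
proof -
  have "attach_first_root n ` forests_of_rank n k \<subset> forests_of_rank n (Suc k)"
    using attach_first_root_mem[OF _ \<open>k < n\<close>] G not_attached by blast
  then have "card (attach_first_root n ` forests_of_rank n k) < card (forests_of_rank n (Suc k))"
    by (rule psubset_card_mono[OF finite_forests_of_rank])
  then show ?thesis using card_image[OF attach_first_root_inj[OF \<open>k < n\<close>]] by simp
qed

lemma card_forests_of_rank_less_star:
  assumes "k + 2 \<le> n"
  shows "card (forests_of_rank n k) < card (forests_of_rank n (Suc k))"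
proof (rule card_forests_of_rank_less)
  define G :: "(nat \<times> nat) set" where "G = Pair 1 ` {2..k + 2}"
  have "card G = Suc k" unfolding G_def by (subst card_image) (auto simp: inj_on_def)
  moreover have "increasing_forest n G" using assms unfolding G_def increasing_forest_def by auto
  moreover have "no_root_inside_edges G" unfolding no_root_inside_edges_def G_def by force
  ultimately show "G \<in> forests_of_rank n (Suc k)"
    using priority_forest_iff unfolding forests_of_rank_def by auto
  show "G \<notin> attach_first_root n ` forests_of_rank n k"
    unfolding attach_first_root_def G_def by auto
qed (use assms in simp)

lemma card_forests_of_rank_less_top:
  assumes "3 \<le> n" and "Suc k = n"
  shows "card (forests_of_rank n k) < card (forests_of_rank n (Suc k))"
proof (rule card_forests_of_rank_less)
  define G :: "(nat \<times> nat) set" where "G = {(0, 1), (0, 2)} \<union> Pair 1 ` {3..n}"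
  have "card G = card {(0 :: nat, 1 :: nat), (0, 2)} + card (Pair (1 :: nat) ` {3..n})"
    unfolding G_def by (rule card_Un_disjoint) auto
  also have "card (Pair (1 :: nat) ` {3..n}) = n - 2" by (subst card_image) (auto simp: inj_on_def)
  finally have "card G = Suc k" using assms by simp
  moreover have "increasing_forest n G" using assms unfolding G_def increasing_forest_def by auto
  moreover have "no_root_inside_edges G"
    unfolding no_root_inside_edges_def G_def by (force intro: image_eqI[of 2 snd "(0, 2)"])
  ultimately show "G \<in> forests_of_rank n (Suc k)"
    using priority_forest_iff unfolding forests_of_rank_def by auto
  show "G \<notin> attach_first_root n ` forests_of_rank n k"
  proof
    assume "G \<in> attach_first_root n ` forests_of_rank n k"
    then obtain E where E: "E \<in> forests_of_rank n k" and G_eq: "G = attach_first_root n E" ..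
    have gap: "no_root_inside_edges E" and r: "first_root n E \<notin> snd ` E"
      using E first_root_is_least_root(2)[of n E] assms priority_forest_iff
      unfolding forests_of_rank_def by auto
    have G_minus_root: "G - {(0, first_root n E)} \<subseteq> E"
      unfolding G_eq attach_first_root_def by blast
    have "(0, first_root n E) \<in> G" unfolding G_eq attach_first_root_def by simp
    \<comment> \<open>without the attached edge, \<open>0-2\<close> passes over the root \<open>1\<close>, resp. \<open>1-3\<close> over the root \<open>2\<close>\<close>
    then consider "first_root n E = 1" | "first_root n E = 2" unfolding G_def by auto
    then show False
    proof cases
      case 1
      then have "(0, 2) \<in> E" using G_minus_root unfolding G_def by auto
      then show False using gap r 1 unfolding no_root_inside_edges_def by fastforce
    next
      case 2
      then have "(1, 3) \<in> E" using G_minus_root assms unfolding G_def by auto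
      then show False using gap r 2 unfolding no_root_inside_edges_def by fastforce
    qed
  qed
qed (use assms in simp)

theorem lemma5p1:
  fixes n :: nat
  shows "(\<forall>k < n. W n k \<le> W n (Suc k)) \<and>
         (n \<ge> 3 \<longrightarrow> (\<forall>k < n. W n k < W n (Suc k)))"
proof (intro conjI allI impI)
  fix k assume "k < n"
  then show "W n k \<le> W n (Suc k)"
    using card_forests_of_rank_le by (simp add: W_eq_card_forests_of_rank)
next
  fix k assume "n \<ge> 3" and "k < n"
  have "card (forests_of_rank n k) < card (forests_of_rank n (Suc k))"
  proof (cases "k + 2 \<le> n")
    case True
    then show ?thesis by (rule card_forests_of_rank_less_star)
  next
    case False
    with \<open>k < n\<close> have "Suc k = n" by simp
    with \<open>n \<ge> 3\<close> show ?thesis by (rule card_forests_of_rank_less_top)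
  qed
  with \<open>k < n\<close> show "W n k < W n (Suc k)" by (simp add: W_eq_card_forests_of_rank)
qed

end
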